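(* Let $G\le\mathrm{O}(d)$ be finite and $x\in\mathbb{R}^d$. The following are equivalent: (a) $x\in P(G)$; (b) $G$ acts freely and transitively on the collection $\{V_p\}_{p\in[x]}$ via $g\cdot V_p:=V_{gp}$ (i.e. the sets $V_{gx}$, $g\in G$, are pairwise distinct); (c) for every $y\in\mathbb{R}^d$, $y\in V_x$ implies $x\in V_y$.
   Context: For $x\in\mathbb{R}^d$, $[x]:=\{gx:g\in G\}$. The open Voronoi cell $V_x$ is the set of $y\in\mathbb{R}^d$ such that $x$ is the unique maximizer of $\langle p,y\rangle$ over $p\in[x]$. The set of principal points is $P(G):=\{x\in\mathbb{R}^d:\mathrm{stab}_G(x)=\{\mathrm{id}\}\}$. *)

theory Defs
  imports "HOL-Analysis.Analysis"
begin

definition finite_orth_group :: "(real^'n^'n) set \<Rightarrow> bool" where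
  "finite_orth_group G \<longleftrightarrow> finite G \<and> (\<forall>A\<in>G. orthogonal_matrix A) \<and> mat 1 \<in> G
     \<and> (\<forall>A\<in>G. \<forall>B\<in>G. A ** B \<in> G) \<and> (\<forall>A\<in>G. transpose A \<in> G)"

definition orbit :: "(real^'n^'n) set \<Rightarrow> real^'n \<Rightarrow> (real^'n) set" where
  "orbit G x = {g *v x | g. g \<in> G}"

definition voronoi :: "(real^'n^'n) set \<Rightarrow> real^'n \<Rightarrow> (real^'n) set" where
  "voronoi G x = {y. (\<forall>p\<in>orbit G x. inner p y \<le> inner x y)
                   \<and> (\<forall>p\<in>orbit G x. inner p y = inner x y \<longrightarrow> p = x)}"

definition stab :: "(real^'n^'n) set \<Rightarrow> real^'n \<Rightarrow> (real^'n^'n) set" where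
  "stab G x = {g\<in>G. g *v x = x}"

definition principal_points :: "(real^'n^'n) set \<Rightarrow> (real^'n) set" where
  "principal_points G = {x. stab G x = {mat 1}}"

end

(* All points p of the orbit [x] have the norm of x, so <p, x> < <x, x> unless p = x.
   Hence x lies in V_x but in no other cell V_p, p in [x]: a cell determines its centre,
   and (b) says that g x = h x forces g = h, i.e. the stabiliser of x is trivial.
   For (c), adjointness <g y, x> = <y, g^T x> turns the comparisons defining x in V_y
   into those defining y in V_x; the equality cases are governed by the stabiliser of x.
   Conversely, every g fixing x fixes every y with x in V_y; under (c) these y include
   the open neighbourhood V_x of x, so g is the identity. *)
theory Submission
  imports Defs
begin

lemma inner_matrix_vector_mul_left:
  fixes A :: "real^'n^'m"
  shows "inner (A *v x) y = inner x (transpose A *v y)"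
  by (metis dot_lmul_matrix vector_transpose_matrix)

lemma orthogonal_matrix_inner:
  fixes A :: "real^'n^'n"
  assumes "orthogonal_matrix A"
  shows "inner (A *v x) (A *v y) = inner x y"
  using assms
  by (simp add: inner_matrix_vector_mul_left matrix_vector_mul_assoc orthogonal_matrix)

lemma orthogonal_matrix_norm:
  fixes A :: "real^'n^'n"
  assumes "orthogonal_matrix A"
  shows "norm (A *v x) = norm x"
  using orthogonal_matrix_inner[OF assms] by (simp add: norm_eq_sqrt_inner)

lemma inner_less_inner_self:
  fixes p q :: "'a::real_inner"
  assumes "norm p = norm q" and "p \<noteq> q"
  shows "inner p q < inner q q"
proof -
  have "0 < inner (p - q) (p - q)" using assms(2) by simp
  also have "\<dots> = 2 * (inner q q - inner p q)"
    using assms(1) by (simp add: inner_diff inner_commute norm_eq_sqrt_inner)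
  finally show ?thesis by simp
qed

lemma matrix_eq_mat_1_if_fixes_ball:
  fixes g :: "real^'n^'n"
  assumes "e > 0" and fixed: "\<And>y. y \<in> ball x e \<Longrightarrow> g *v y = y"
  shows "g = mat 1"
  unfolding matrix_eq
proof
  fix z :: "real^'n"
  show "g *v z = mat 1 *v z"
  proof (cases "z = 0")
    case False
    define c where "c = e / (2 * norm z)"
    have "c > 0" using \<open>e > 0\<close> False by (simp add: c_def)
    have "x + c *\<^sub>R z \<in> ball x e"
      using \<open>e > 0\<close> False by (simp add: c_def dist_norm)
    then have "g *v (x + c *\<^sub>R z) = x + c *\<^sub>R z" using fixed by blast
    then have "g *v x + c *\<^sub>R (g *v z) = x + c *\<^sub>R z"
      by (simp add: matrix_vector_right_distrib matrix_vector_mult_scaleR)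
    moreover have "g *v x = x" using fixed \<open>e > 0\<close> by simp
    ultimately show ?thesis using \<open>c > 0\<close> by simp
  qed simp
qed

lemma mem_voronoi_iff:
  "y \<in> voronoi G x \<longleftrightarrow> (\<forall>p\<in>orbit G x. p \<noteq> x \<longrightarrow> inner p y < inner x y)"
  unfolding voronoi_def by (auto simp: order_le_less)

lemma voronoi_eq_Inter:
  "voronoi G x = (\<Inter>p\<in>orbit G x - {x}. {y. inner p y < inner x y})"
  by (auto simp: mem_voronoi_iff)

locale orth_group =
  fixes G :: "(real^'n^'n) set"
  assumes finite_orth_group: "finite_orth_group G"
begin

lemma finite: "finite G"
  and orthogonal: "g \<in> G \<Longrightarrow> orthogonal_matrix g"
  and mat_1_mem: "mat 1 \<in> G"
  and mult_mem: "g \<in> G \<Longrightarrow> h \<in> G \<Longrightarrow> g ** h \<in> G"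
  and transpose_mem: "g \<in> G \<Longrightarrow> transpose g \<in> G"
  using finite_orth_group unfolding finite_orth_group_def by auto

lemma orbit_eq_image: "orbit G x = (\<lambda>g. g *v x) ` G"
  by (auto simp: orbit_def)

lemma orbit_eq_if_mem:
  assumes "p \<in> orbit G x"
  shows "orbit G p = orbit G x"
proof -
  obtain g where g: "g \<in> G" "p = g *v x" using assms by (auto simp: orbit_def)
  have "h *v x = (h ** transpose g) *v p" for h
    using orthogonal[OF g(1)] g(2)
    by (metis matrix_mul_assoc matrix_mul_rid matrix_vector_mul_assoc orthogonal_matrix)
  then have "orbit G x \<subseteq> orbit G p"
    unfolding orbit_def using mult_mem transpose_mem g(1) by blast
  moreover have "orbit G p \<subseteq> orbit G x"
    using mult_mem g by (auto simp: orbit_eq_image matrix_vector_mul_assoc)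
  ultimately show ?thesis by blast
qed

lemma norm_mem_orbit: "p \<in> orbit G x \<Longrightarrow> norm p = norm x"
  using orthogonal by (auto simp: orbit_def orthogonal_matrix_norm)

lemma open_voronoi: "open (voronoi G x)"
proof -
  have "finite (orbit G x - {x})" using finite by (simp add: orbit_eq_image)
  moreover have "open {y. inner p y < inner x y}" for p :: "real^'n"
    by (intro open_Collect_less continuous_intros)
  ultimately show ?thesis
    unfolding voronoi_eq_Inter by blast
qed

lemma center_mem_voronoi: "x \<in> voronoi G x"
  unfolding mem_voronoi_iff using norm_mem_orbit inner_less_inner_self by blast

lemma mem_voronoi_orbit_imp_eq:
  assumes "p \<in> orbit G x" "q \<in> orbit G x" and "q \<in> voronoi G p"
  shows "q = p"
proof (rule ccontr)
  assume "q \<noteq> p"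
  have "q \<in> orbit G p" using assms(1,2) orbit_eq_if_mem by simp
  then have "inner q q < inner p q"
    using assms(3) \<open>q \<noteq> p\<close> by (simp add: mem_voronoi_iff)
  moreover have "inner p q < inner q q"
    using norm_mem_orbit assms(1,2) \<open>q \<noteq> p\<close> by (intro inner_less_inner_self) auto
  ultimately show False by simp
qed

lemma voronoi_eq_iff_on_orbit:
  assumes "p \<in> orbit G x" "q \<in> orbit G x"
  shows "voronoi G p = voronoi G q \<longleftrightarrow> p = q"
  using mem_voronoi_orbit_imp_eq[OF assms] center_mem_voronoi by blast

lemma principal_points_iff: "x \<in> principal_points G \<longleftrightarrow> (\<forall>g\<in>G. g *v x = x \<longrightarrow> g = mat 1)"
  using mat_1_mem by (auto simp: principal_points_def stab_def)

lemma principal_points_iff_free: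
  "x \<in> principal_points G \<longleftrightarrow> (\<forall>g\<in>G. \<forall>h\<in>G. g *v x = h *v x \<longrightarrow> g = h)"
proof
  assume principal: "x \<in> principal_points G"
  show "\<forall>g\<in>G. \<forall>h\<in>G. g *v x = h *v x \<longrightarrow> g = h"
  proof (intro ballI impI)
    fix g h assume "g \<in> G" "h \<in> G" and "g *v x = h *v x"
    then have "(transpose g ** h) *v x = x"
      using orthogonal[OF \<open>g \<in> G\<close>]
      by (metis matrix_vector_mul_assoc matrix_vector_mul_lid orthogonal_matrix)
    then have "transpose g ** h = mat 1"
      using principal \<open>g \<in> G\<close> \<open>h \<in> G\<close> mult_mem transpose_mem by (simp add: principal_points_iff)
    then show "g = h"
      using orthogonal[OF \<open>g \<in> G\<close>]
      by (metis matrix_mul_assoc matrix_mul_lid matrix_mul_rid orthogonal_matrix_def)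
  qed
qed (use mat_1_mem in \<open>auto simp: principal_points_iff\<close>)

lemma voronoi_symmetric_if_principal:
  assumes "x \<in> principal_points G" and "y \<in> voronoi G x"
  shows "x \<in> voronoi G y"
  unfolding mem_voronoi_iff
proof (intro ballI impI)
  fix p assume "p \<in> orbit G y" "p \<noteq> y"
  then obtain g where g: "g \<in> G" "p = g *v y" by (auto simp: orbit_def)
  then have "g \<noteq> mat 1" using \<open>p \<noteq> y\<close> by auto
  then have "transpose g *v x \<noteq> x"
    using assms(1) transpose_mem[OF g(1)] by (metis principal_points_iff transpose_mat transpose_transpose)
  moreover have "transpose g *v x \<in> orbit G x"
    unfolding orbit_def using transpose_mem[OF g(1)] by blast
  ultimately have "inner (transpose g *v x) y < inner x y"
    using assms(2) by (simp add: mem_voronoi_iff)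
  then show "inner p x < inner y x"
    using g(2) by (metis inner_commute inner_matrix_vector_mul_left)
qed

lemma stab_fixes_if_mem_voronoi:
  assumes "g \<in> stab G x" and "x \<in> voronoi G y"
  shows "g *v y = y"
proof -
  have "transpose g *v x = x"
    using assms(1) orthogonal
    by (metis (mono_tags, lifting) matrix_vector_mul_assoc matrix_vector_mul_lid mem_Collect_eq orthogonal_matrix stab_def)
  then have "inner (g *v y) x = inner y x"
    by (simp add: inner_matrix_vector_mul_left)
  moreover have "g *v y \<in> orbit G y"
    using assms(1) by (auto simp: orbit_def stab_def)
  ultimately show ?thesis
    using assms(2) by (auto simp: mem_voronoi_iff inner_commute)
qed

lemma principal_if_voronoi_symmetric:
  assumes "\<And>y. y \<in> voronoi G x \<Longrightarrow> x \<in> voronoi G y"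
  shows "x \<in> principal_points G"
proof -
  obtain e where "e > 0" and ball: "ball x e \<subseteq> voronoi G x"
    using open_voronoi center_mem_voronoi openE by blast
  have "g = mat 1" if "g \<in> stab G x" for g
    using \<open>e > 0\<close> ball assms stab_fixes_if_mem_voronoi[OF that]
    by (intro matrix_eq_mat_1_if_fixes_ball) auto
  then show ?thesis
    using principal_points_iff by (auto simp: stab_def)
qed

end

theorem lemma23:
  fixes G :: "(real^'n^'n) set" and x :: "real^'n"
  assumes "finite_orth_group G"
  shows "(x \<in> principal_points G
          \<longleftrightarrow> (\<forall>g\<in>G. \<forall>h\<in>G. voronoi G (g *v x) = voronoi G (h *v x) \<longrightarrow> g = h))
       \<and> (x \<in> principal_points G
          \<longleftrightarrow> (\<forall>y. y \<in> voronoi G x \<longrightarrow> x \<in> voronoi G y))"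
proof -
  interpret orth_group G by (fact orth_group.intro[OF assms])
  have "voronoi G (g *v x) = voronoi G (h *v x) \<longleftrightarrow> g *v x = h *v x" if "g \<in> G" "h \<in> G" for g h
    using that by (intro voronoi_eq_iff_on_orbit) (auto simp: orbit_def)
  then show ?thesis
    using principal_points_iff_free voronoi_symmetric_if_principal principal_if_voronoi_symmetric
    by blast
qed

end
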